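(* Let $p\ge2$ be an integer, $A_0\in GL_{n_1}(\mathbb{C})$ and $B_0\in GL_{n_2}(\mathbb{C})$. If $T\in\mathcal{M}_{n_2,n_1}(\mathbb{C}((z)))$ satisfies $\phi_p(T)A_0=B_0T$, then $T\in\mathcal{M}_{n_2,n_1}(\mathbb{C})$.
   Context: $\mathbb{C}((z))$ is the field of formal Laurent series and $\phi_p$ acts entrywise by $f(z)\mapsto f(z^p)$. *)

theory Defs
  imports "HOL-Analysis.Analysis" "HOL-Computational_Algebra.Formal_Laurent_Series"
begin

definition phi_mat :: "nat \<Rightarrow> 'a::zero fls ^'n ^'m \<Rightarrow> 'a fls ^'n ^'m" where
  "phi_mat p T = (\<chi> i j. fls_compose_power (T $ i $ j) p)"

definition const_mat :: "'a::zero ^'n ^'m \<Rightarrow> 'a fls ^'n ^'m" where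
  "const_mat A = (\<chi> i j. fls_const (A $ i $ j))"

end

theory Submission
  imports Defs
begin

text \<open>Write \<open>T\<close> as \<open>\<Sum>\<^sub>k T\<^sub>k z\<^sup>k\<close> with constant coefficient matrices \<open>T\<^sub>k\<close>.
  Comparing coefficients of \<open>z\<^sup>k\<close> gives \<open>B\<^sub>0 T\<^sub>k = T\<^bsub>k div p\<^esub> A\<^sub>0\<close> if \<open>p\<close>
  divides \<open>k\<close>, and \<open>B\<^sub>0 T\<^sub>k = 0\<close> otherwise. As \<open>B\<^sub>0\<close> is invertible, \<open>T\<^sub>k \<noteq> 0\<close>
  forces \<open>p dvd k\<close> and \<open>T\<^bsub>k div p\<^esub> \<noteq> 0\<close>. For \<open>k \<noteq> 0\<close> this descent strictly
  decreases \<open>\<bar>k\<bar>\<close> without ever reaching \<open>0\<close>, so it cannot start: \<open>T\<^sub>k = 0\<close>.\<close>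

definition fls_mat_nth :: "'a::zero fls ^'n ^'m \<Rightarrow> int \<Rightarrow> 'a ^'n ^'m" where
  "fls_mat_nth T k = (\<chi> i j. fls_nth (T $ i $ j) k)"

lemma fls_mat_eq_iff: "T = U \<longleftrightarrow> (\<forall>k. fls_mat_nth T k = fls_mat_nth U k)"
  by (auto simp: vec_eq_iff fls_eq_iff fls_mat_nth_def)

lemma fls_mat_nth_const_mat: "fls_mat_nth (const_mat C) k = (if k = 0 then C else 0)"
  by (simp add: vec_eq_iff fls_mat_nth_def const_mat_def)

lemma fls_mat_nth_phi_mat:
  assumes "p > 0"
  shows "fls_mat_nth (phi_mat p T) k = (if int p dvd k then fls_mat_nth T (k div int p) else 0)"
  using assms by (simp add: vec_eq_iff fls_mat_nth_def phi_mat_def fls_nth_compose_power)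

lemma fls_mat_nth_mult_const_mat:
  fixes T :: "'a::comm_semiring_1 fls ^'n ^'m"
  shows "fls_mat_nth (T ** const_mat A) k = fls_mat_nth T k ** A"
  by (simp add: vec_eq_iff fls_mat_nth_def const_mat_def matrix_matrix_mult_def fls_nth_sum)

lemma fls_mat_nth_const_mat_mult:
  fixes T :: "'a::comm_semiring_1 fls ^'n ^'m"
  shows "fls_mat_nth (const_mat B ** T) k = B ** fls_mat_nth T k"
  by (simp add: vec_eq_iff fls_mat_nth_def const_mat_def matrix_matrix_mult_def fls_nth_sum)

lemma fls_mat_eq_const_mat:
  assumes "\<And>k. k \<noteq> 0 \<Longrightarrow> fls_mat_nth T k = 0"
  shows "T = const_mat (fls_mat_nth T 0)"
  using assms by (simp add: fls_mat_eq_iff fls_mat_nth_const_mat)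

lemma invertible_matrix_mul_eq_0:
  fixes B :: "'a::semiring_1 ^'m ^'m"
  assumes "invertible B" and "B ** X = 0"
  shows "X = 0"
proof -
  obtain B' where "B' ** B = mat 1"
    using assms(1) unfolding invertible_def by blast
  then have "X = B' ** (B ** X)"
    by (simp add: matrix_mul_assoc)
  with assms(2) show ?thesis
    by simp
qed

lemma eq_0_if_support_descends:
  fixes c :: "int \<Rightarrow> 'a::zero"
  assumes "p \<ge> 2"
    and descent: "\<And>k. c k \<noteq> 0 \<Longrightarrow> int p dvd k \<and> c (k div int p) \<noteq> 0"
    and "k \<noteq> 0"
  shows "c k = 0"
  using \<open>k \<noteq> 0\<close>
proof (induction "nat \<bar>k\<bar>" arbitrary: k rule: less_induct)
  case less
  show ?case
  proof (rule ccontr)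
    assume "c k \<noteq> 0"
    with descent have "int p dvd k" and "c (k div int p) \<noteq> 0"
      by blast+
    then obtain j where k: "k = int p * j" and "c j \<noteq> 0"
      using \<open>p \<ge> 2\<close> by (auto elim!: dvdE)
    moreover have "j \<noteq> 0"
      using k less.prems by auto
    moreover have "nat \<bar>j\<bar> < nat \<bar>k\<bar>"
      using k \<open>j \<noteq> 0\<close> \<open>p \<ge> 2\<close> by (simp add: abs_mult)
    ultimately show False
      using less.hyps by blast
  qed
qed

theorem mainTheorem14:
  fixes p :: nat
    and A0 :: "complex ^'n1 ^'n1"
    and B0 :: "complex ^'n2 ^'n2"
    and T :: "complex fls ^'n1 ^'n2"
  assumes "p \<ge> 2"
    and "invertible A0"
    and "invertible B0"
    and "phi_mat p T ** const_mat A0 = const_mat B0 ** T"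
  shows "\<exists>C :: complex ^'n1 ^'n2. T = const_mat C"
proof -
  have coeff: "B0 ** fls_mat_nth T k =
      (if int p dvd k then fls_mat_nth T (k div int p) else 0) ** A0" for k
    using arg_cong[OF assms(4), of "\<lambda>U. fls_mat_nth U k"] \<open>p \<ge> 2\<close>
    by (simp add: fls_mat_nth_mult_const_mat fls_mat_nth_const_mat_mult fls_mat_nth_phi_mat)
  have "int p dvd k \<and> fls_mat_nth T (k div int p) \<noteq> 0" if "fls_mat_nth T k \<noteq> 0" for k
    using coeff[of k] invertible_matrix_mul_eq_0[OF assms(3)] that
    by (auto split: if_splits)
  then have "fls_mat_nth T k = 0" if "k \<noteq> 0" for k
    using eq_0_if_support_descends[OF \<open>p \<ge> 2\<close>] that by blast
  then show ?thesis
    using fls_mat_eq_const_mat by blast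
qed

end
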